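(* Let $\mathcal K^*$ be a reasonable ordered Fraïssé class in the language $L\cup\{<\}$ with $L$-reduct $\mathcal K$, and assume $G_{\mathcal K^*}$ is oligomorphic. If $G_{\mathcal K^*}$ is a normal subgroup of $G_\mathcal K$, then it has finite index in $G_\mathcal K$.
   Context: A Fraïssé class is a class of finite structures that is hereditary, has joint embedding and amalgamation, and contains arbitrarily large finite structures; $\mathrm{Flim}$ denotes the Fraïssé limit and $G_\mathcal K=\mathrm{Aut}(\mathrm{Flim}(\mathcal K))$. An ordered class $\mathcal K^*$ consists of structures $(A,<^A)$ with $<^A$ a linear order on an $L$-structure $A$ ($\mathcal K^*$-admissible orders); its $L$-reduct is $\{A:(A,<^A)\in\mathcal K^*\}$. $\mathcal K^*$ is reasonable if for all $A,B$ in the reduct, every embedding $a:A\to B$ and every admissible $<^A$ on $A$, there is an admissible $<^B$ on $B$ making $a$ an embedding $(A,<^A)\to(B,<^B)$. For reasonable $\mathcal K^*$ one has $\mathrm{Flim}(\mathcal K^* )=(\mathrm{Flim}(\mathcal K),<^* )$ for some linear order $<^*$, and $G_{\mathcal K^*}$ is thereby identified with the subgroup of $G_\mathcal K$ preserving $<^*$. A permutation group on $F$ is oligomorphic if for every $n$ its diagonal action on $F^n$ has finitely many orbits. *)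

theory Defs
  imports "HOL-Algebra.Bij" "HOL-Algebra.Coset" "HOL-Library.Countable_Set"
begin

text \<open>A language is given by a type of relation symbols with arities ra and a
type of function symbols with arities fa (constants are 0-ary functions). Only tuples of the right length from the
universe are ever relevant.\<close>

record ('a, 'r, 'f) struc =
  s_univ :: "'a set"
  s_rel  :: "'r \<Rightarrow> 'a list \<Rightarrow> bool"
  s_fns  :: "'f \<Rightarrow> 'a list \<Rightarrow> 'a"

definition closed_in :: "('f \<Rightarrow> nat) \<Rightarrow> ('a, 'r, 'f) struc \<Rightarrow> 'a set \<Rightarrow> bool" where
  "closed_in fa M S \<longleftrightarrow>
     (\<forall>f xs. length xs = fa f \<and> set xs \<subseteq> S \<longrightarrow> s_fns M f xs \<in> S)"

definition is_struc :: "('f \<Rightarrow> nat) \<Rightarrow> ('a, 'r, 'f) struc \<Rightarrow> bool" where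
  "is_struc fa A \<longleftrightarrow> closed_in fa A (s_univ A)"

definition embedding ::
  "('r \<Rightarrow> nat) \<Rightarrow> ('f \<Rightarrow> nat) \<Rightarrow> ('a, 'r, 'f) struc \<Rightarrow> ('a, 'r, 'f) struc \<Rightarrow> ('a \<Rightarrow> 'a) \<Rightarrow> bool" where
  "embedding ra fa A B h \<longleftrightarrow>
     inj_on h (s_univ A) \<and> h ` s_univ A \<subseteq> s_univ B \<and>
     (\<forall>r xs. length xs = ra r \<and> set xs \<subseteq> s_univ A \<longrightarrow>
        (s_rel B r (map h xs) \<longleftrightarrow> s_rel A r xs)) \<and>
     (\<forall>f xs. length xs = fa f \<and> set xs \<subseteq> s_univ A \<longrightarrow>
        h (s_fns A f xs) = s_fns B f (map h xs))"

definition isomorphism ::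
  "('r \<Rightarrow> nat) \<Rightarrow> ('f \<Rightarrow> nat) \<Rightarrow> ('a, 'r, 'f) struc \<Rightarrow> ('a, 'r, 'f) struc \<Rightarrow> ('a \<Rightarrow> 'a) \<Rightarrow> bool" where
  "isomorphism ra fa A B h \<longleftrightarrow> embedding ra fa A B h \<and> h ` s_univ A = s_univ B"

definition Aut :: "('r \<Rightarrow> nat) \<Rightarrow> ('f \<Rightarrow> nat) \<Rightarrow> ('a, 'r, 'f) struc \<Rightarrow> ('a \<Rightarrow> 'a) set" where
  "Aut ra fa M = {g \<in> Bij (s_univ M). isomorphism ra fa M M g}"

definition AutGrp :: "('r \<Rightarrow> nat) \<Rightarrow> ('f \<Rightarrow> nat) \<Rightarrow> ('a, 'r, 'f) struc \<Rightarrow> ('a \<Rightarrow> 'a) monoid" where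
  "AutGrp ra fa M = (BijGroup (s_univ M)) \<lparr>carrier := Aut ra fa M\<rparr>"

definition oligomorphic :: "'a set \<Rightarrow> ('a \<Rightarrow> 'a) set \<Rightarrow> bool" where
  "oligomorphic F G \<longleftrightarrow>
     (\<forall>n. finite ({xs. length xs = n \<and> set xs \<subseteq> F} //
                   {(xs, ys). \<exists>g\<in>G. map g xs = ys}))"

definition fraisse_class ::
  "('r \<Rightarrow> nat) \<Rightarrow> ('f \<Rightarrow> nat) \<Rightarrow> ('a, 'r, 'f) struc set \<Rightarrow> bool" where
  "fraisse_class ra fa K \<longleftrightarrow>
     \<comment> \<open>a class of finite structures\<close>
     (\<forall>A\<in>K. is_struc fa A \<and> finite (s_univ A)) \<and>
     \<comment> \<open>closed under isomorphism\<close>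
     (\<forall>A B h. A \<in> K \<and> is_struc fa B \<and> isomorphism ra fa A B h \<longrightarrow> B \<in> K) \<and>
     \<comment> \<open>hereditary\<close>
     (\<forall>A B h. A \<in> K \<and> is_struc fa B \<and> finite (s_univ B) \<and> embedding ra fa B A h \<longrightarrow> B \<in> K) \<and>
     \<comment> \<open>joint embedding\<close>
     (\<forall>A\<in>K. \<forall>B\<in>K. \<exists>C\<in>K. \<exists>f g. embedding ra fa A C f \<and> embedding ra fa B C g) \<and>
     \<comment> \<open>amalgamation\<close>
     (\<forall>A\<in>K. \<forall>B\<in>K. \<forall>C\<in>K. \<forall>f g. embedding ra fa A B f \<and> embedding ra fa A C g \<longrightarrow>
        (\<exists>D\<in>K. \<exists>f' g'. embedding ra fa B D f' \<and> embedding ra fa C D g' \<and>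
           (\<forall>x\<in>s_univ A. f' (f x) = g' (g x)))) \<and>
     \<comment> \<open>arbitrarily large finite structures\<close>
     (\<forall>n. \<exists>A\<in>K. n \<le> card (s_univ A))"

definition age :: "('r \<Rightarrow> nat) \<Rightarrow> ('f \<Rightarrow> nat) \<Rightarrow> ('a, 'r, 'f) struc \<Rightarrow> ('a, 'r, 'f) struc set" where
  "age ra fa M = {A. is_struc fa A \<and> finite (s_univ A) \<and> (\<exists>h. embedding ra fa A M h)}"

definition locally_finite :: "('f \<Rightarrow> nat) \<Rightarrow> ('a, 'r, 'f) struc \<Rightarrow> bool" where
  "locally_finite fa M \<longleftrightarrow>
     (\<forall>S. finite S \<and> S \<subseteq> s_univ M \<longrightarrow>
        (\<exists>T. S \<subseteq> T \<and> T \<subseteq> s_univ M \<and> finite T \<and> closed_in fa M T))"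

definition ultrahomogeneous :: "('r \<Rightarrow> nat) \<Rightarrow> ('f \<Rightarrow> nat) \<Rightarrow> ('a, 'r, 'f) struc \<Rightarrow> bool" where
  "ultrahomogeneous ra fa M \<longleftrightarrow>
     (\<forall>S T h. S \<subseteq> s_univ M \<and> T \<subseteq> s_univ M \<and> finite S \<and>
        closed_in fa M S \<and> closed_in fa M T \<and>
        isomorphism ra fa (M\<lparr>s_univ := S\<rparr>) (M\<lparr>s_univ := T\<rparr>) h \<longrightarrow>
        (\<exists>g\<in>Aut ra fa M. \<forall>x\<in>S. g x = h x))"

text \<open>M is (a copy of) the Fraisse limit of K: the countable ultrahomogeneous
(locally finite) structure whose age is K. Fraisse limits are unique up to
isomorphism, so this characterises Flim(K).\<close>

definition is_Flim ::
  "('r \<Rightarrow> nat) \<Rightarrow> ('f \<Rightarrow> nat) \<Rightarrow> ('a, 'r, 'f) struc set \<Rightarrow> ('a, 'r, 'f) struc \<Rightarrow> bool" where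
  "is_Flim ra fa K M \<longleftrightarrow>
     is_struc fa M \<and> countable (s_univ M) \<and> locally_finite fa M \<and>
     ultrahomogeneous ra fa M \<and> age ra fa M = K"

text \<open>The relation symbols of L \<union> {<} are 'r option: None is the binary symbol <.\<close>

definition ord_ar :: "('r \<Rightarrow> nat) \<Rightarrow> 'r option \<Rightarrow> nat" where
  "ord_ar ra s = (case s of None \<Rightarrow> 2 | Some r \<Rightarrow> ra r)"

definition reduct :: "('a, 'r option, 'f) struc \<Rightarrow> ('a, 'r, 'f) struc" where
  "reduct A = \<lparr>s_univ = s_univ A, s_rel = (\<lambda>r. s_rel A (Some r)), s_fns = s_fns A\<rparr>"

definition ord_of :: "('a, 'r option, 'f) struc \<Rightarrow> 'a \<Rightarrow> 'a \<Rightarrow> bool" where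
  "ord_of A x y = s_rel A None [x, y]"

definition expand :: "('a, 'r, 'f) struc \<Rightarrow> ('a \<Rightarrow> 'a \<Rightarrow> bool) \<Rightarrow> ('a, 'r option, 'f) struc" where
  "expand M lt = \<lparr>s_univ = s_univ M,
     s_rel = (\<lambda>s xs. case s of None \<Rightarrow> lt (xs ! 0) (xs ! 1) | Some r \<Rightarrow> s_rel M r xs),
     s_fns = s_fns M\<rparr>"

definition strict_linear_order_on :: "'a set \<Rightarrow> ('a \<Rightarrow> 'a \<Rightarrow> bool) \<Rightarrow> bool" where
  "strict_linear_order_on U lt \<longleftrightarrow>
     (\<forall>x\<in>U. \<not> lt x x) \<and>
     (\<forall>x\<in>U. \<forall>y\<in>U. \<forall>z\<in>U. lt x y \<and> lt y z \<longrightarrow> lt x z) \<and>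
     (\<forall>x\<in>U. \<forall>y\<in>U. x \<noteq> y \<longrightarrow> lt x y \<or> lt y x)"

definition ordered_class :: "('a, 'r option, 'f) struc set \<Rightarrow> bool" where
  "ordered_class Ks \<longleftrightarrow> (\<forall>A\<in>Ks. strict_linear_order_on (s_univ A) (ord_of A))"

definition reasonable ::
  "('r \<Rightarrow> nat) \<Rightarrow> ('f \<Rightarrow> nat) \<Rightarrow> ('a, 'r option, 'f) struc set \<Rightarrow> bool" where
  "reasonable ra fa Ks \<longleftrightarrow>
     (\<forall>A B a As. A \<in> reduct ` Ks \<and> B \<in> reduct ` Ks \<and> embedding ra fa A B a \<and>
        As \<in> Ks \<and> reduct As = A \<longrightarrow>
        (\<exists>Bs\<in>Ks. reduct Bs = B \<and> embedding (ord_ar ra) fa As Bs a))"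

end

theory Submission
  imports Defs
begin

text \<open>
  Let \<open>G = Aut(M)\<close> and let \<open>H = Aut(M, <)\<close> be the subgroup preserving the order.
  For \<open>g \<in> G\<close> consider the pulled-back order \<open>x \<prec>\<^sub>g y \<longleftrightarrow> g x < g y\<close>.
  (1) \<open>\<prec>\<^sub>g\<close> determines the coset \<open>H g\<close>: if \<open>\<prec>\<^sub>g\<^sub>1 = \<prec>\<^sub>g\<^sub>2\<close> then \<open>g\<^sub>1 g\<^sub>2\<inverse>\<close> preserves \<open><\<close>.
  (2) If \<open>H\<close> is normal, then \<open>g h = h' g\<close> with \<open>h' \<in> H\<close>, so every \<open>\<prec>\<^sub>g\<close> is an
      \<open>H\<close>-invariant binary relation.
  (3) Since \<open>H\<close> is oligomorphic it has finitely many orbits on pairs, and an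
      \<open>H\<close>-invariant relation is a union of such orbits; so there are only
      finitely many \<open>H\<close>-invariant relations.
  Hence \<open>g \<mapsto> \<prec>\<^sub>g\<close> has finite image and, by (1), there are finitely many cosets.
\<close>

lemma (in group) finite_rcosets_if_separated:
  assumes H: "subgroup H G"
    and fin: "finite (R ` carrier G)"
    and sep: "\<And>g1 g2. g1 \<in> carrier G \<Longrightarrow> g2 \<in> carrier G \<Longrightarrow> R g1 = R g2 \<Longrightarrow> g1 \<in> H #> g2"
  shows "finite (rcosets H)"
proof -
  define rep where "rep r = (SOME g. g \<in> carrier G \<and> R g = r)" for r
  have "rcosets H \<subseteq> (\<lambda>r. H #> rep r) ` (R ` carrier G)"
  proof
    fix C assume "C \<in> rcosets H"
    then obtain g where g: "g \<in> carrier G" "C = H #> g"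
      by (auto simp: RCOSETS_def)
    have "\<exists>g'. g' \<in> carrier G \<and> R g' = R g" using g(1) by blast
    then have rep: "rep (R g) \<in> carrier G" "R (rep (R g)) = R g"
      unfolding rep_def by (metis (mono_tags, lifting) someI_ex)+
    have "H #> rep (R g) = H #> g"
      using repr_independence[OF sep[OF g(1) rep(1) rep(2)[symmetric]] rep(1) H] by simp
    then show "C \<in> (\<lambda>r. H #> rep r) ` (R ` carrier G)" using g by blast
  qed
  then show ?thesis using fin by (rule finite_subset[OF _ finite_imageI])
qed

definition rel_invariant :: "('a \<Rightarrow> 'a) set \<Rightarrow> 'a rel \<Rightarrow> bool" where
  "rel_invariant H R \<longleftrightarrow> (\<forall>h\<in>H. \<forall>x y. (x, y) \<in> R \<longrightarrow> (h x, h y) \<in> R)"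

text \<open>Step (3): an oligomorphic set of maps containing the identity on \<open>U\<close> has only finitely
  many invariant relations on \<open>U\<close>: each is the union of the pair-orbits it meets.\<close>

lemma finite_invariant_relations:
  assumes olig: "oligomorphic U H"
    and e: "e \<in> H" "\<And>x. x \<in> U \<Longrightarrow> e x = x"
  shows "finite {R. R \<subseteq> U \<times> U \<and> rel_invariant H R}"
proof -
  define E where "E = {(xs, ys). \<exists>h\<in>H. map h xs = ys}"
  define Orb where "Orb = {xs. length xs = 2 \<and> set xs \<subseteq> U} // E"
  define union_of where "union_of S = {(x, y). x \<in> U \<and> y \<in> U \<and> (\<exists>c\<in>S. [x, y] \<in> c)}" for S
  have "finite Orb"
    using olig by (simp add: oligomorphic_def Orb_def E_def)
  moreover have "{R. R \<subseteq> U \<times> U \<and> rel_invariant H R} \<subseteq> union_of ` Pow Orb"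
  proof clarify
    fix R assume RU: "R \<subseteq> U \<times> U" and inv: "rel_invariant H R"
    define S where "S = {c \<in> Orb. \<forall>xs\<in>c. (xs ! 0, xs ! 1) \<in> R}"
    have "R \<subseteq> union_of S"
    proof clarify
      fix x y assume xy: "(x, y) \<in> R"
      then have U: "x \<in> U" "y \<in> U" using RU by auto
      define c where "c = E `` {[x, y]}"
      have "c \<in> Orb" unfolding Orb_def c_def using U by (intro quotientI) auto
      moreover have "[x, y] \<in> c"
        using e U by (auto simp: c_def E_def intro!: bexI[of _ e])
      moreover have "\<forall>xs\<in>c. (xs ! 0, xs ! 1) \<in> R"
        using inv xy by (auto simp: c_def E_def rel_invariant_def)
      ultimately show "(x, y) \<in> union_of S" using U by (auto simp: union_of_def S_def)
    qed
    moreover have "union_of S \<subseteq> R" by (auto simp: union_of_def S_def)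
    ultimately have "R = union_of S" by blast
    then show "R \<in> union_of ` Pow Orb" by (auto simp: S_def)
  qed
  ultimately show ?thesis by (meson finite_Pow_iff finite_imageI finite_subset)
qed

lemma AutGrp_carrier: "carrier (AutGrp ra fa M) = Aut ra fa M"
  by (simp add: AutGrp_def)

lemma AutGrp_mult_apply:
  assumes "x \<in> Aut ra fa M" "y \<in> Aut ra fa M" "z \<in> s_univ M"
  shows "(x \<otimes>\<^bsub>AutGrp ra fa M\<^esub> y) z = x (y z)"
  using assms by (simp add: AutGrp_def BijGroup_def Aut_def compose_def)

lemma AutGrp_one: "\<one>\<^bsub>AutGrp ra fa M\<^esub> = (\<lambda>z\<in>s_univ M. z)"
  by (simp add: AutGrp_def BijGroup_def)

lemma Aut_surj: "g \<in> Aut ra fa M \<Longrightarrow> g ` s_univ M = s_univ M"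
  by (simp add: Aut_def Bij_def bij_betw_def)

lemma Aut_expand_preserves_order:
  assumes "h \<in> Aut (ord_ar ra) fa (expand M lt)" "x \<in> s_univ M" "y \<in> s_univ M"
  shows "lt (h x) (h y) = lt x y"
proof -
  have "embedding (ord_ar ra) fa (expand M lt) (expand M lt) h"
    using assms(1) by (simp add: Aut_def isomorphism_def)
  then have "length [x, y] = ord_ar ra None \<Longrightarrow> set [x, y] \<subseteq> s_univ (expand M lt) \<Longrightarrow>
      s_rel (expand M lt) None (map h [x, y]) = s_rel (expand M lt) None [x, y]"
    unfolding embedding_def by blast
  then show ?thesis using assms(2,3) by (simp add: ord_ar_def expand_def)
qed

lemma Aut_expandI:
  assumes g: "g \<in> Aut ra fa M"
    and ord: "\<And>x y. x \<in> s_univ M \<Longrightarrow> y \<in> s_univ M \<Longrightarrow> lt (g x) (g y) = lt x y"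
  shows "g \<in> Aut (ord_ar ra) fa (expand M lt)"
proof -
  have bij: "g \<in> Bij (s_univ M)" and emb: "embedding ra fa M M g"
    and onto: "g ` s_univ M = s_univ M"
    using g by (auto simp: Aut_def isomorphism_def)
  have rel: "s_rel (expand M lt) r (map g xs) = s_rel (expand M lt) r xs"
    if len: "length xs = ord_ar ra r" and xs: "set xs \<subseteq> s_univ M" for r xs
  proof (cases r)
    case None
    then obtain x y where "xs = [x, y]"
      using len by (auto simp: ord_ar_def numeral_2_eq_2 length_Suc_conv)
    then show ?thesis using ord xs None by (simp add: expand_def)
  next
    case (Some r')
    then show ?thesis using emb len xs by (simp add: embedding_def expand_def ord_ar_def)
  qed
  have "embedding (ord_ar ra) fa (expand M lt) (expand M lt) g"
    using emb onto rel by (simp add: embedding_def expand_def)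
  then show ?thesis using bij onto by (simp add: Aut_def isomorphism_def expand_def)
qed

definition pullback_order :: "'a set \<Rightarrow> ('a \<Rightarrow> 'a \<Rightarrow> bool) \<Rightarrow> ('a \<Rightarrow> 'a) \<Rightarrow> 'a rel" where
  "pullback_order U lt g = {(x, y). x \<in> U \<and> y \<in> U \<and> lt (g x) (g y)}"

lemma same_pullback_order_same_coset:
  assumes grp: "group (AutGrp ra fa M)"
    and g1: "g1 \<in> Aut ra fa M" and g2: "g2 \<in> Aut ra fa M"
    and eq: "pullback_order (s_univ M) lt g1 = pullback_order (s_univ M) lt g2"
  shows "g1 \<in> Aut (ord_ar ra) fa (expand M lt) #>\<^bsub>AutGrp ra fa M\<^esub> g2"
proof -
  interpret group "AutGrp ra fa M" by (rule grp)
  define h where "h = g1 \<otimes>\<^bsub>AutGrp ra fa M\<^esub> inv\<^bsub>AutGrp ra fa M\<^esub> g2"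
  have g1G: "g1 \<in> carrier (AutGrp ra fa M)" and g2G: "g2 \<in> carrier (AutGrp ra fa M)"
    using g1 g2 by (simp_all add: AutGrp_carrier)
  have "h \<in> carrier (AutGrp ra fa M)" using g1G g2G by (simp add: h_def)
  then have h: "h \<in> Aut ra fa M" by (simp add: AutGrp_carrier)
  have hg2: "h \<otimes>\<^bsub>AutGrp ra fa M\<^esub> g2 = g1"
    using g1G g2G by (simp add: h_def m_assoc)
  have "lt (h x) (h y) = lt x y" if "x \<in> s_univ M" "y \<in> s_univ M" for x y
  proof -
    have "x \<in> g2 ` s_univ M" "y \<in> g2 ` s_univ M" using that Aut_surj[OF g2] by simp_all
    then obtain x' y' where x': "x' \<in> s_univ M" "x = g2 x'" and y': "y' \<in> s_univ M" "y = g2 y'"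
      by blast
    have "h x = g1 x'" "h y = g1 y'"
      using AutGrp_mult_apply[OF h g2] x' y' hg2 by auto
    moreover have "lt (g1 x') (g1 y') = lt (g2 x') (g2 y')"
      using eq x'(1) y'(1) by (auto simp: pullback_order_def set_eq_iff)
    ultimately show ?thesis using x' y' by simp
  qed
  then have "h \<in> Aut (ord_ar ra) fa (expand M lt)" using Aut_expandI[OF h] by blast
  then show ?thesis using hg2 by (auto simp: r_coset_def)
qed

lemma normal_AutGrp_commute:
  assumes nH: "H \<lhd> AutGrp ra fa M" and g: "g \<in> Aut ra fa M" and h: "h \<in> H"
  shows "\<exists>h'\<in>H. \<forall>z\<in>s_univ M. g (h z) = h' (g z)"
proof -
  interpret normal H "AutGrp ra fa M" by (rule nH)
  define h' where "h' = g \<otimes>\<^bsub>AutGrp ra fa M\<^esub> h \<otimes>\<^bsub>AutGrp ra fa M\<^esub> inv\<^bsub>AutGrp ra fa M\<^esub> g"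
  have gG: "g \<in> carrier (AutGrp ra fa M)" and hG: "h \<in> carrier (AutGrp ra fa M)"
    using g h subset by (auto simp: AutGrp_carrier)
  have h'H: "h' \<in> H" using inv_op_closed2 gG h by (simp add: h'_def)
  have comm: "h' \<otimes>\<^bsub>AutGrp ra fa M\<^esub> g = g \<otimes>\<^bsub>AutGrp ra fa M\<^esub> h"
    using gG hG by (simp add: h'_def m_assoc)
  have "g (h z) = h' (g z)" if z: "z \<in> s_univ M" for z
    using AutGrp_mult_apply[OF _ g z, of h'] AutGrp_mult_apply[OF g _ z, of h]
      comm h'H hG subset by (auto simp: AutGrp_carrier)
  with h'H show ?thesis by blast
qed

lemma pullback_order_invariant:
  assumes nH: "Aut (ord_ar ra) fa (expand M lt) \<lhd> AutGrp ra fa M"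
    and g: "g \<in> Aut ra fa M"
  shows "rel_invariant (Aut (ord_ar ra) fa (expand M lt)) (pullback_order (s_univ M) lt g)"
  unfolding rel_invariant_def
proof (intro ballI allI impI)
  fix h x y
  assume h: "h \<in> Aut (ord_ar ra) fa (expand M lt)" and xy: "(x, y) \<in> pullback_order (s_univ M) lt g"
  then have U: "x \<in> s_univ M" "y \<in> s_univ M" and lt: "lt (g x) (g y)"
    by (auto simp: pullback_order_def)
  have "h \<in> Aut ra fa M"
    using h normal.axioms(1)[OF nH] by (auto simp: subgroup_def AutGrp_carrier)
  then have hU: "h x \<in> s_univ M" "h y \<in> s_univ M" using Aut_surj U by blast+
  obtain h' where h': "h' \<in> Aut (ord_ar ra) fa (expand M lt)"
    and comm: "\<forall>z\<in>s_univ M. g (h z) = h' (g z)"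
    using normal_AutGrp_commute[OF nH g h] by blast
  have gU: "g x \<in> s_univ M" "g y \<in> s_univ M" using Aut_surj[OF g] U by blast+
  have "lt (g (h x)) (g (h y))"
    using comm U lt Aut_expand_preserves_order[OF h' gU] by simp
  then show "(h x, h y) \<in> pullback_order (s_univ M) lt g"
    using hU by (simp add: pullback_order_def)
qed

theorem mainTheorem17:
  fixes ra :: "'r \<Rightarrow> nat" and fa :: "'f \<Rightarrow> nat"
    and Ks :: "('a, 'r option, 'f) struc set"
    and M :: "('a, 'r, 'f) struc" and lt :: "'a \<Rightarrow> 'a \<Rightarrow> bool"
  assumes "fraisse_class (ord_ar ra) fa Ks"
    and "ordered_class Ks"
    and "reasonable ra fa Ks"
    and "is_Flim ra fa (reduct ` Ks) M"
    and "is_Flim (ord_ar ra) fa Ks (expand M lt)"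
    and "oligomorphic (s_univ M) (Aut (ord_ar ra) fa (expand M lt))"
    and "Aut (ord_ar ra) fa (expand M lt) \<lhd> AutGrp ra fa M"
  shows "finite (rcosets\<^bsub>AutGrp ra fa M\<^esub> (Aut (ord_ar ra) fa (expand M lt)))"
proof -
  let ?G = "AutGrp ra fa M" and ?H = "Aut (ord_ar ra) fa (expand M lt)"
  let ?U = "s_univ M" and ?R = "pullback_order (s_univ M) lt"
  interpret normal ?H ?G by (rule assms(7))
  have unit: "\<one>\<^bsub>?G\<^esub> \<in> ?H" "\<And>x. x \<in> ?U \<Longrightarrow> \<one>\<^bsub>?G\<^esub> x = x"
    by (rule subgroup.one_closed[OF is_subgroup]) (simp add: AutGrp_one)
  have "?R ` carrier ?G \<subseteq> {R. R \<subseteq> ?U \<times> ?U \<and> rel_invariant ?H R}"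
    using pullback_order_invariant[OF assms(7)]
    by (auto simp: AutGrp_carrier pullback_order_def)
  then have "finite (?R ` carrier ?G)"
    using finite_invariant_relations[OF assms(6) unit] by (rule finite_subset)
  then show ?thesis
  proof (rule finite_rcosets_if_separated[OF is_subgroup])
    fix g1 g2 assume "g1 \<in> carrier ?G" "g2 \<in> carrier ?G" "?R g1 = ?R g2"
    then show "g1 \<in> ?H #>\<^bsub>?G\<^esub> g2"
      using same_pullback_order_same_coset[OF is_group] by (simp add: AutGrp_carrier)
  qed
qed

end
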